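(* For all integers $n\geq 2$ and $k\geq 0$, $$2nJ_{2n,k}=[k(k+1)+2n-2]J_{2n-2,k}+2[(k-1)(2n-k-1)+1]J_{2n-2,k-1}+[(2n-k)(2n-k+1)+2n-2]J_{2n-2,k-2},$$ where $J_{m,j}=0$ for $j<0$.
   Context: For a permutation $\pi=a_1a_2\cdots a_m$ of $[m]=\{1,\ldots,m\}$, a descent is an index $1\leq i\leq m-1$ with $a_i>a_{i+1}$, and ${\rm d}(\pi)$ is the number of descents. A fixed-point free involution of $[m]$ is a permutation $\pi$ with $\pi^2=\mathrm{id}$ and $\pi(i)\neq i$ for all $i$. $J_{m,j}$ denotes the number of fixed-point free involutions of $[m]$ with exactly $j$ descents (so $J_{m,j}=0$ for $j<0$ or $j>m-1$). *)

theory Defs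
  imports "HOL-Combinatorics.Combinatorics"
begin

definition descents :: "nat \<Rightarrow> (nat \<Rightarrow> nat) \<Rightarrow> nat set" where
  "descents m \<pi> = {i. 1 \<le> i \<and> i \<le> m - 1 \<and> \<pi> i > \<pi> (Suc i)}"

definition des :: "nat \<Rightarrow> (nat \<Rightarrow> nat) \<Rightarrow> nat" where
  "des m \<pi> = card (descents m \<pi>)"

definition fpf_involutions :: "nat \<Rightarrow> (nat \<Rightarrow> nat) set" where
  "fpf_involutions m = {\<pi>. \<pi> permutes {1..m} \<and> \<pi> \<circ> \<pi> = id \<and> (\<forall>i\<in>{1..m}. \<pi> i \<noteq> i)}"

definition J :: "nat \<Rightarrow> int \<Rightarrow> int" where
  "J m j = (if j < 0 then 0
            else int (card {\<pi> \<in> fpf_involutions m. int (des m \<pi>) = j}))"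

end

theory Submission
  imports Defs
begin

text \<open>
  Double count the pairs \<open>(\<pi>, a)\<close> of a fixed-point-free involution \<open>\<pi>\<close> of \<open>[N + 2]\<close> and an
  arc \<open>(a, \<pi> a)\<close>, \<open>a < \<pi> a\<close>. Every \<open>\<pi>\<close> has \<open>(N + 2) / 2\<close> arcs, and deleting an arc
  leaves a fixed-point-free involution \<open>\<sigma>\<close> of \<open>[N]\<close> together with a slot
  \<open>s1 \<le> s2 \<le> N\<close> recording where the arc sat; every pair \<open>(\<sigma>, slot)\<close> arises exactly once.
  Reinserting the arc raises the number of descents by some \<open>c \<in> {0, 1, 2}\<close>, so the number of
  slots with a prescribed increment is a quadratic polynomial in the moments \<open>\<Sum>c\<close> and
  \<open>\<Sum>c\<^sup>2\<close> over all \<open>(N + 1)(N + 2) / 2\<close> slots. Expressed through the local descent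
  changes of single-letter insertions these moments telescope, and because \<open>\<sigma>\<close> is a
  fixed-point-free involution they depend on \<open>\<sigma>\<close> only through its number of descents.
\<close>

section \<open>Fixed-point-free involutions and their arcs\<close>

lemma fpf_involutions_iff:
  "\<pi> \<in> fpf_involutions m \<longleftrightarrow>
     (\<forall>x. \<pi> (\<pi> x) = x) \<and> (\<forall>x. x \<notin> {1..m} \<longrightarrow> \<pi> x = x) \<and> (\<forall>x\<in>{1..m}. \<pi> x \<noteq> x)"
proof -
  have "\<pi> permutes {1..m}" if "\<forall>x. \<pi> (\<pi> x) = x" "\<forall>x. x \<notin> {1..m} \<longrightarrow> \<pi> x = x"
    using that involuntory_imp_bij[of \<pi>] by (auto simp: permutes_def bij_iff)
  then show ?thesis
    unfolding fpf_involutions_def by (auto simp: fun_eq_iff permutes_not_in)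
qed

lemma fpf_involution_permutes: "\<pi> \<in> fpf_involutions m \<Longrightarrow> \<pi> permutes {1..m}"
  by (simp add: fpf_involutions_def)

lemma fpf_involution_twice: "\<pi> \<in> fpf_involutions m \<Longrightarrow> \<pi> (\<pi> x) = x"
  by (simp add: fpf_involutions_iff)

lemma finite_fpf_involutions: "finite (fpf_involutions m)"
proof (rule finite_subset)
  show "fpf_involutions m \<subseteq> {p. p permutes {1..m}}"
    by (auto simp: fpf_involutions_def)
  show "finite {p. p permutes {1..m::nat}}"
    by (rule finite_permutations) simp
qed

lemma fpf_involution_in:
  assumes "\<pi> \<in> fpf_involutions m" and "x \<in> {1..m}"
  shows "\<pi> x \<in> {1..m}"
  using assms permutes_in_image[of \<pi> "{1..m}" x] unfolding fpf_involutions_def by simp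

lemma J_eq_sum: "J m j = (\<Sum>\<pi>\<in>fpf_involutions m. of_bool (int (des m \<pi>) = j))"
  using finite_fpf_involutions by (auto simp: J_def Collect_conj_eq Int_commute)

definition arc_openers :: "nat \<Rightarrow> (nat \<Rightarrow> nat) \<Rightarrow> nat set" where
  "arc_openers m \<pi> = {a \<in> {1..m}. a < \<pi> a}"

lemma card_arc_openers:
  assumes \<pi>: "\<pi> \<in> fpf_involutions m"
  shows "2 * card (arc_openers m \<pi>) = m"
proof -
  define closers where "closers = {a \<in> {1..m}. \<pi> a < a}"
  have invol: "\<pi> (\<pi> x) = x" and no_fix: "x \<in> {1..m} \<Longrightarrow> \<pi> x \<noteq> x" for x
    using \<pi> by (auto simp: fpf_involutions_iff)
  have "\<pi> x \<in> closers" if "x \<in> arc_openers m \<pi>" for x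
    using that fpf_involution_in[OF \<pi>, of x] unfolding arc_openers_def closers_def by (simp add: invol)
  moreover have "\<pi> x \<in> arc_openers m \<pi>" if "x \<in> closers" for x
    using that fpf_involution_in[OF \<pi>, of x] unfolding arc_openers_def closers_def by (simp add: invol)
  ultimately have "bij_betw \<pi> (arc_openers m \<pi>) closers"
    by (intro bij_betw_byWitness[where f' = \<pi>]) (auto simp: invol)
  then have "card closers = card (arc_openers m \<pi>)"
    by (simp add: bij_betw_same_card)
  moreover have "arc_openers m \<pi> \<union> closers = {1..m}"
  proof
    show "{1..m} \<subseteq> arc_openers m \<pi> \<union> closers"
      using no_fix unfolding arc_openers_def closers_def by (force simp: linorder_neq_iff)
  qed (auto simp: arc_openers_def closers_def)
  moreover have "arc_openers m \<pi> \<inter> closers = {}"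
    unfolding arc_openers_def closers_def by auto
  ultimately show ?thesis
    using card_Un_disjoint[of "arc_openers m \<pi>" closers] by (simp add: arc_openers_def closers_def)
qed

section \<open>Inserting a letter\<close>

definition raise_above :: "nat \<Rightarrow> nat \<Rightarrow> nat" where
  "raise_above t v = (if v \<le> t then v else Suc v)"

definition lower_above :: "nat \<Rightarrow> nat \<Rightarrow> nat" where
  "lower_above s x = (if x \<le> s then x else x - 1)"

lemma raise_above_less_iff [simp]: "raise_above t a < raise_above t b \<longleftrightarrow> a < b"
  by (auto simp: raise_above_def)

lemma raise_above_eq_iff [simp]: "raise_above t a = raise_above t b \<longleftrightarrow> a = b"
  by (auto simp: raise_above_def)

text \<open>In one-line notation, \<^term>\<open>insert_letter w s t\<close> is \<open>w\<close> with the new letter \<open>t + 1\<close>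
  inserted at position \<open>s + 1\<close> and every old letter above \<open>t\<close> raised by one.\<close>

definition insert_letter :: "(nat \<Rightarrow> nat) \<Rightarrow> nat \<Rightarrow> nat \<Rightarrow> nat \<Rightarrow> nat" where
  "insert_letter w s t x = (if x = Suc s then Suc t else raise_above t (w (lower_above s x)))"

lemma permutes_insert_letter:
  assumes w: "w permutes {1..L}" and "s \<le> L" "t \<le> L"
  shows "insert_letter w s t permutes {1..Suc L}"
  unfolding permutes_def
proof (intro conjI allI impI)
  fix x assume "x \<notin> {1..Suc L}"
  then consider "x = 0" | "Suc L < x" by fastforce
  then show "insert_letter w s t x = x"
  proof cases
    case 1
    then show ?thesis
      using permutes_not_in[OF w, of 0] by (simp add: insert_letter_def lower_above_def raise_above_def)
  next
    case 2
    then have "w (x - 1) = x - 1"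
      by (intro permutes_not_in[OF w]) auto
    then show ?thesis
      using 2 assms by (simp add: insert_letter_def lower_above_def raise_above_def)
  qed
next
  fix y
  have "inj (insert_letter w s t)"
  proof (rule injI)
    fix x1 x2 assume eq: "insert_letter w s t x1 = insert_letter w s t x2"
    show "x1 = x2"
    proof (cases "x1 = Suc s \<or> x2 = Suc s")
      case True
      then show ?thesis using eq by (auto simp: insert_letter_def raise_above_def split: if_splits)
    next
      case False
      then have "lower_above s x1 = lower_above s x2"
        using eq permutes_inj[OF w] by (simp add: insert_letter_def inj_eq)
      then show ?thesis using False by (auto simp: lower_above_def split: if_splits)
    qed
  qed
  moreover have "y \<in> range (insert_letter w s t)"
  proof (cases "y = Suc t")
    case False
    obtain v where "w v = lower_above t y"
      using permutes_surj[OF w] by (metis surjD)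
    then have "insert_letter w s t (raise_above s v) = y"
      using False by (auto simp: insert_letter_def lower_above_def raise_above_def)
    then show ?thesis by (metis rangeI)
  qed (auto simp: insert_letter_def)
  ultimately show "\<exists>!x. insert_letter w s t x = y"
    by (metis injD rangeE)
qed

lemma permutes_le_Suc:
  assumes "w permutes {1..L}" and "x \<le> Suc L"
  shows "w x \<le> Suc L"
  using permutes_in_image[OF assms(1), of x] permutes_not_in[OF assms(1), of x] assms(2)
  by (cases "x \<in> {1..L}") auto

text \<open>Descents of the word \<open>w 0, w 1, \<dots>, w (L + 1)\<close>. The sentinels \<open>w 0 = 0\<close> and
  \<open>w (L + 1) = L + 1\<close> of a permutation of \<open>{1..L}\<close> add no descent but remove all boundary
  cases from the analysis of insertions.\<close>

definition ext_des :: "nat \<Rightarrow> (nat \<Rightarrow> nat) \<Rightarrow> int" where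
  "ext_des L w = (\<Sum>i<Suc L. of_bool (w (Suc i) < w i))"

lemma des_eq_ext_des:
  assumes w: "w permutes {1..L}"
  shows "int (des L w) = ext_des L w"
proof -
  have "w 0 = 0" "w (Suc L) = Suc L"
    using permutes_not_in[OF w] by auto
  moreover have "w L \<le> L" if "L \<ge> 1"
    using permutes_in_image[OF w, of L] that by auto
  ultimately have "1 \<le> i \<and> i \<le> L - 1" if "i \<le> L" "w (Suc i) < w i" for i
    using that by (cases "i = 0"; cases "i = L") auto
  then have "{..<Suc L} \<inter> {i. w (Suc i) < w i} = descents L w"
    unfolding descents_def by (auto simp: less_Suc_eq_le)
  then show ?thesis
    unfolding ext_des_def des_def by (simp del: sum.lessThan_Suc)
qed

definition des_change :: "(nat \<Rightarrow> nat) \<Rightarrow> nat \<Rightarrow> nat \<Rightarrow> int" where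
  "des_change w s t = of_bool (t < w s) - of_bool (t < w (Suc s)) + of_bool (w s < w (Suc s))"

lemma des_change_cases: "des_change w s t \<in> {0, 1}"
  by (auto simp: des_change_def)

lemma sum_lessThan_split:
  fixes f :: "nat \<Rightarrow> 'a::comm_monoid_add"
  assumes "s \<le> L"
  shows "(\<Sum>i<Suc L. f i) = (\<Sum>i<s. f i) + f s + (\<Sum>i\<in>{Suc s..<Suc L}. f i)"
proof -
  have "{..<Suc L} = {..<s} \<union> {s..<Suc L}" using assms by auto
  then have "(\<Sum>i<Suc L. f i) = (\<Sum>i<s. f i) + (\<Sum>i\<in>{s..<Suc L}. f i)"
    by (simp add: sum.union_disjoint ivl_disj_int)
  also have "(\<Sum>i\<in>{s..<Suc L}. f i) = f s + (\<Sum>i\<in>{Suc s..<Suc L}. f i)"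
    by (rule sum.atLeast_Suc_lessThan) (use assms in simp)
  finally show ?thesis by (simp only: add.assoc)
qed

lemma ext_des_insert_letter:
  assumes "w s \<noteq> w (Suc s)" and "s \<le> L"
  shows "ext_des (Suc L) (insert_letter w s t) = ext_des L w + des_change w s t"
proof -
  let ?w' = "insert_letter w s t"
  let ?d = "\<lambda>i. (of_bool (w (Suc i) < w i) :: int)"
  let ?d' = "\<lambda>i. (of_bool (?w' (Suc i) < ?w' i) :: int)"
  have before: "(\<Sum>i<s. ?d' i) = (\<Sum>i<s. ?d i)"
    by (rule sum.cong) (auto simp: insert_letter_def lower_above_def)
  have after: "(\<Sum>i\<in>{Suc (Suc s)..<Suc (Suc L)}. ?d' i) = (\<Sum>i\<in>{Suc s..<Suc L}. ?d i)"
    by (subst sum.shift_bounds_Suc_ivl, rule sum.cong)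
       (auto simp: insert_letter_def lower_above_def)
  have old: "ext_des L w = (\<Sum>i<s. ?d i) + ?d s + (\<Sum>i\<in>{Suc s..<Suc L}. ?d i)"
    unfolding ext_des_def by (rule sum_lessThan_split[OF assms(2)])
  have "ext_des (Suc L) ?w' = (\<Sum>i<s. ?d' i) + ?d' s + (\<Sum>i\<in>{Suc s..<Suc (Suc L)}. ?d' i)"
    unfolding ext_des_def by (rule sum_lessThan_split) (use assms(2) in simp)
  also have "(\<Sum>i\<in>{Suc s..<Suc (Suc L)}. ?d' i)
      = ?d' (Suc s) + (\<Sum>i\<in>{Suc (Suc s)..<Suc (Suc L)}. ?d' i)"
    by (rule sum.atLeast_Suc_lessThan) (use assms(2) in simp)
  finally have new: "ext_des (Suc L) ?w' = (\<Sum>i<s. ?d i) + (?d' s + ?d' (Suc s)) + (\<Sum>i\<in>{Suc s..<Suc L}. ?d i)"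
    unfolding before after by (simp only: add.assoc)
  have "?d' s + ?d' (Suc s) = of_bool (t < w s) + of_bool (w (Suc s) \<le> t)"
    by (auto simp: insert_letter_def lower_above_def raise_above_def)
  also have "\<dots> = ?d s + des_change w s t"
    using assms(1) by (auto simp: des_change_def)
  finally show ?thesis
    using old new by linarith
qed

lemma des_change_insert_letter:
  assumes "s1 \<le> s2"
  shows "des_change (insert_letter w s2 s1) s1 (Suc s2) = (if s1 = s2 then 1 else des_change w s1 s2)"
  using assms by (auto simp: des_change_def insert_letter_def lower_above_def raise_above_def)

section \<open>Inserting and deleting an arc\<close>

text \<open>For \<open>s1 \<le> s2\<close>, \<^term>\<open>insert_arc \<sigma> s1 s2\<close> adds the arc \<open>(s1 + 1, s2 + 2)\<close> to \<open>\<sigma>\<close>, shifting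
  the old letters and positions around it.\<close>

definition insert_arc :: "(nat \<Rightarrow> nat) \<Rightarrow> nat \<Rightarrow> nat \<Rightarrow> nat \<Rightarrow> nat" where
  "insert_arc \<sigma> s1 s2 = insert_letter (insert_letter \<sigma> s2 s1) s1 (Suc s2)"

text \<open>For \<open>s1 \<le> s2\<close>, \<^term>\<open>open_gaps s1 s2\<close> is the increasing bijection from the natural numbers
  onto those different from \<open>s1 + 1\<close> and \<open>s2 + 2\<close>, with inverse \<^term>\<open>close_gaps s1 s2\<close>.\<close>

definition open_gaps :: "nat \<Rightarrow> nat \<Rightarrow> nat \<Rightarrow> nat" where
  "open_gaps s1 s2 v = raise_above (Suc s2) (raise_above s1 v)"

definition close_gaps :: "nat \<Rightarrow> nat \<Rightarrow> nat \<Rightarrow> nat" where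
  "close_gaps s1 s2 x = lower_above s2 (lower_above s1 x)"

definition delete_arc :: "(nat \<Rightarrow> nat) \<Rightarrow> nat \<Rightarrow> nat \<Rightarrow> nat" where
  "delete_arc \<pi> a = close_gaps (a - 1) (\<pi> a - 2) \<circ> \<pi> \<circ> open_gaps (a - 1) (\<pi> a - 2)"

context
  fixes s1 s2 :: nat
  assumes s12: "s1 \<le> s2"
begin

lemma close_open_gaps [simp]: "close_gaps s1 s2 (open_gaps s1 s2 v) = v"
  using s12 by (auto simp: lower_above_def raise_above_def open_gaps_def close_gaps_def)

lemma open_close_gaps:
  "x \<noteq> Suc s1 \<Longrightarrow> x \<noteq> Suc (Suc s2) \<Longrightarrow> open_gaps s1 s2 (close_gaps s1 s2 x) = x"
  using s12 by (auto simp: lower_above_def raise_above_def open_gaps_def close_gaps_def)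

lemma open_gaps_neq: "open_gaps s1 s2 v \<noteq> Suc s1" "open_gaps s1 s2 v \<noteq> Suc (Suc s2)"
  using s12 by (auto simp: raise_above_def open_gaps_def)

lemma open_gaps_mem_iff:
  "s2 \<le> N \<Longrightarrow> open_gaps s1 s2 v \<in> {1..Suc (Suc N)} \<longleftrightarrow> v \<in> {1..N}"
  using s12 by (auto simp: raise_above_def open_gaps_def)

lemma close_gaps_mem_iff:
  "s2 \<le> N \<Longrightarrow> x \<noteq> Suc s1 \<Longrightarrow> x \<noteq> Suc (Suc s2) \<Longrightarrow>
    close_gaps s1 s2 x \<in> {1..N} \<longleftrightarrow> x \<in> {1..Suc (Suc N)}"
  using s12 by (auto simp: lower_above_def close_gaps_def)

lemma insert_arc_eq:
  "insert_arc \<sigma> s1 s2 x =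
    (if x = Suc s1 then Suc (Suc s2) else if x = Suc (Suc s2) then Suc s1
     else open_gaps s1 s2 (\<sigma> (close_gaps s1 s2 x)))"
  using s12 by (auto simp: insert_arc_def insert_letter_def lower_above_def raise_above_def
      open_gaps_def close_gaps_def)

lemma delete_insert_arc: "delete_arc (insert_arc \<sigma> s1 s2) (Suc s1) = \<sigma>"
  by (auto simp: delete_arc_def insert_arc_eq open_gaps_neq)

lemma insert_arc_in_fpf_involutions:
  assumes \<sigma>: "\<sigma> \<in> fpf_involutions N" and "s2 \<le> N"
  shows "insert_arc \<sigma> s1 s2 \<in> fpf_involutions (Suc (Suc N))"
proof -
  have invol: "\<sigma> (\<sigma> x) = x" and outside: "x \<notin> {1..N} \<Longrightarrow> \<sigma> x = x"
    and no_fix: "x \<in> {1..N} \<Longrightarrow> \<sigma> x \<noteq> x" for x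
    using \<sigma> by (auto simp: fpf_involutions_iff)
  have off_arc: "insert_arc \<sigma> s1 s2 x = open_gaps s1 s2 (\<sigma> (close_gaps s1 s2 x))"
    if "x \<noteq> Suc s1" "x \<noteq> Suc (Suc s2)" for x
    using that by (simp add: insert_arc_eq)
  have "insert_arc \<sigma> s1 s2 (insert_arc \<sigma> s1 s2 x) = x" for x
    using s12 by (cases "x = Suc s1 \<or> x = Suc (Suc s2)")
      (auto simp: insert_arc_eq off_arc open_gaps_neq invol open_close_gaps)
  moreover have "insert_arc \<sigma> s1 s2 x = x" if "x \<notin> {1..Suc (Suc N)}" for x
  proof -
    have "x \<noteq> Suc s1" "x \<noteq> Suc (Suc s2)"
      using that s12 \<open>s2 \<le> N\<close> by auto
    with that show ?thesis
      using close_gaps_mem_iff[OF \<open>s2 \<le> N\<close>] by (simp add: off_arc outside open_close_gaps)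
  qed
  moreover have "insert_arc \<sigma> s1 s2 x \<noteq> x" if "x \<in> {1..Suc (Suc N)}" for x
  proof (cases "x = Suc s1 \<or> x = Suc (Suc s2)")
    case False
    then have "close_gaps s1 s2 x \<in> {1..N}"
      using that close_gaps_mem_iff[OF \<open>s2 \<le> N\<close>] by blast
    then have "\<sigma> (close_gaps s1 s2 x) \<noteq> close_gaps s1 s2 x"
      by (rule no_fix)
    then show ?thesis
      using False by (metis off_arc close_open_gaps)
  qed (use s12 in \<open>auto simp: insert_arc_eq\<close>)
  ultimately show ?thesis
    by (simp add: fpf_involutions_iff)
qed

end

lemma arc_opener_slot:
  assumes "a \<in> arc_openers (Suc (Suc N)) \<pi>" and "\<pi> \<in> fpf_involutions (Suc (Suc N))"
  obtains s1 s2 where "s1 \<le> s2" "s2 \<le> N" "a = Suc s1" "\<pi> a = Suc (Suc s2)"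
proof
  show "a - 1 \<le> \<pi> a - 2" "\<pi> a - 2 \<le> N" "a = Suc (a - 1)" "\<pi> a = Suc (Suc (\<pi> a - 2))"
    using assms fpf_involution_in[OF assms(2), of a] by (auto simp: arc_openers_def)
qed

context
  fixes \<pi> :: "nat \<Rightarrow> nat" and N s1 s2 :: nat
  assumes \<pi>: "\<pi> \<in> fpf_involutions (Suc (Suc N))"
    and s12: "s1 \<le> s2" "s2 \<le> N" and arc: "\<pi> (Suc s1) = Suc (Suc s2)"
begin

lemma arc_reverse: "\<pi> (Suc (Suc s2)) = Suc s1"
  using arc fpf_involution_twice[OF \<pi>] by metis

lemma open_gaps_delete_arc:
  "open_gaps s1 s2 (delete_arc \<pi> (Suc s1) v) = \<pi> (open_gaps s1 s2 v)"
proof -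
  have "\<pi> (open_gaps s1 s2 v) \<noteq> Suc s1" "\<pi> (open_gaps s1 s2 v) \<noteq> Suc (Suc s2)"
    using open_gaps_neq[OF s12(1), of v] arc arc_reverse fpf_involution_twice[OF \<pi>] by metis+
  then show ?thesis
    by (simp add: delete_arc_def arc open_close_gaps[OF s12(1)])
qed

lemma delete_arc_in_fpf_involutions: "delete_arc \<pi> (Suc s1) \<in> fpf_involutions N"
proof -
  have outside: "x \<notin> {1..Suc (Suc N)} \<Longrightarrow> \<pi> x = x"
    and no_fix: "x \<in> {1..Suc (Suc N)} \<Longrightarrow> \<pi> x \<noteq> x" for x
    using \<pi> by (auto simp: fpf_involutions_iff)
  have delete_eq_iff: "delete_arc \<pi> (Suc s1) v = w \<longleftrightarrow> \<pi> (open_gaps s1 s2 v) = open_gaps s1 s2 w"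
    for v w
    by (metis open_gaps_delete_arc close_open_gaps[OF s12(1)])
  have open_mem: "open_gaps s1 s2 v \<in> {1..Suc (Suc N)} \<longleftrightarrow> v \<in> {1..N}" for v
    by (rule open_gaps_mem_iff[OF s12])
  have "delete_arc \<pi> (Suc s1) (delete_arc \<pi> (Suc s1) v) = v" for v
    by (simp add: delete_eq_iff open_gaps_delete_arc fpf_involution_twice[OF \<pi>])
  moreover have "delete_arc \<pi> (Suc s1) v = v" if "v \<notin> {1..N}" for v
    using that outside open_mem by (metis delete_eq_iff)
  moreover have "delete_arc \<pi> (Suc s1) v \<noteq> v" if "v \<in> {1..N}" for v
    using that no_fix open_mem by (metis delete_eq_iff)
  ultimately show ?thesis
    by (simp add: fpf_involutions_iff)
qed

lemma insert_delete_arc: "insert_arc (delete_arc \<pi> (Suc s1)) s1 s2 = \<pi>"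
proof
  fix x
  show "insert_arc (delete_arc \<pi> (Suc s1)) s1 s2 x = \<pi> x"
  proof (cases "x = Suc s1 \<or> x = Suc (Suc s2)")
    case True
    then show ?thesis
      using arc arc_reverse by (auto simp: insert_arc_eq[OF s12(1)])
  next
    case False
    then show ?thesis
      by (simp add: insert_arc_eq[OF s12(1)] open_gaps_delete_arc open_close_gaps[OF s12(1)])
  qed
qed

end

definition arc_slots :: "nat \<Rightarrow> (nat \<times> nat) set" where
  "arc_slots N = {(s1, s2). s1 \<le> s2 \<and> s2 \<le> N}"

lemma finite_arc_slots: "finite (arc_slots N)"
  by (rule finite_subset[of _ "{..N} \<times> {..N}"]) (auto simp: arc_slots_def)

lemma sum_arc_slots: "(\<Sum>p\<in>arc_slots N. f p) = (\<Sum>s2<Suc N. \<Sum>s1<Suc s2. f (s1, s2))"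
proof -
  have "arc_slots N = prod.swap ` (SIGMA s2:{..<Suc N}. {..<Suc s2})"
    by (auto simp: arc_slots_def image_iff)
  then have "(\<Sum>p\<in>arc_slots N. f p) = (\<Sum>(s2, s1)\<in>(SIGMA s2:{..<Suc N}. {..<Suc s2}). f (s1, s2))"
    by (simp add: sum.reindex case_prod_unfold) (simp add: prod.swap_def)
  also have "\<dots> = (\<Sum>s2<Suc N. \<Sum>s1<Suc s2. f (s1, s2))"
    by (rule sum.Sigma [symmetric]) auto
  finally show ?thesis .
qed

lemma card_arc_slots: "2 * card (arc_slots N) = Suc N * Suc (Suc N)"
proof -
  have "2 * (\<Sum>s2<K. Suc s2) = K * Suc K" for K
    by (induction K) simp_all
  then show ?thesis
    using sum_arc_slots[of "\<lambda>_. 1::nat" N] by simp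
qed

lemma bij_betw_insert_arc:
  "bij_betw (\<lambda>(\<sigma>, s1, s2). (insert_arc \<sigma> s1 s2, Suc s1))
     (fpf_involutions N \<times> arc_slots N)
     (SIGMA \<pi>:fpf_involutions (Suc (Suc N)). arc_openers (Suc (Suc N)) \<pi>)"
proof (rule bij_betw_byWitness[where f' = "\<lambda>(\<pi>, a). (delete_arc \<pi> a, a - 1, \<pi> a - 2)"])
  show "\<forall>x\<in>fpf_involutions N \<times> arc_slots N.
      (\<lambda>(\<pi>, a). (delete_arc \<pi> a, a - 1, \<pi> a - 2)) ((\<lambda>(\<sigma>, s1, s2). (insert_arc \<sigma> s1 s2, Suc s1)) x) = x"
    by (auto simp: arc_slots_def delete_insert_arc insert_arc_eq)
  show "(\<lambda>(\<sigma>, s1, s2). (insert_arc \<sigma> s1 s2, Suc s1)) ` (fpf_involutions N \<times> arc_slots N)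
      \<subseteq> (SIGMA \<pi>:fpf_involutions (Suc (Suc N)). arc_openers (Suc (Suc N)) \<pi>)"
    by (auto simp: arc_slots_def arc_openers_def insert_arc_in_fpf_involutions insert_arc_eq)
  show "\<forall>y\<in>SIGMA \<pi>:fpf_involutions (Suc (Suc N)). arc_openers (Suc (Suc N)) \<pi>.
      (\<lambda>(\<sigma>, s1, s2). (insert_arc \<sigma> s1 s2, Suc s1)) ((\<lambda>(\<pi>, a). (delete_arc \<pi> a, a - 1, \<pi> a - 2)) y) = y"
    by (auto elim!: arc_opener_slot simp: insert_delete_arc)
  show "(\<lambda>(\<pi>, a). (delete_arc \<pi> a, a - 1, \<pi> a - 2)) `
      (SIGMA \<pi>:fpf_involutions (Suc (Suc N)). arc_openers (Suc (Suc N)) \<pi>)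
      \<subseteq> fpf_involutions N \<times> arc_slots N"
    by (auto elim!: arc_opener_slot simp: delete_arc_in_fpf_involutions arc_slots_def)
qed

lemma sum_insert_arc:
  fixes f :: "(nat \<Rightarrow> nat) \<Rightarrow> 'a::comm_semiring_1"
  shows "(\<Sum>\<sigma>\<in>fpf_involutions N. \<Sum>(s1, s2)\<in>arc_slots N. f (insert_arc \<sigma> s1 s2))
       = (\<Sum>\<pi>\<in>fpf_involutions (Suc (Suc N)). of_nat (card (arc_openers (Suc (Suc N)) \<pi>)) * f \<pi>)"
proof -
  have "(\<Sum>\<sigma>\<in>fpf_involutions N. \<Sum>(s1, s2)\<in>arc_slots N. f (insert_arc \<sigma> s1 s2))
      = (\<Sum>(\<sigma>, s1, s2)\<in>fpf_involutions N \<times> arc_slots N. f (insert_arc \<sigma> s1 s2))"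
    by (simp add: sum.cartesian_product)
  also have "\<dots> = (\<Sum>(\<pi>, a)\<in>(SIGMA \<pi>:fpf_involutions (Suc (Suc N)). arc_openers (Suc (Suc N)) \<pi>). f \<pi>)"
    using sum.reindex_bij_betw[OF bij_betw_insert_arc, of "\<lambda>(\<pi>, a). f \<pi>"]
    by (simp add: case_prod_beta)
  also have "\<dots> = (\<Sum>\<pi>\<in>fpf_involutions (Suc (Suc N)). \<Sum>a\<in>arc_openers (Suc (Suc N)) \<pi>. f \<pi>)"
    by (rule sum.Sigma [symmetric]) (auto simp: finite_fpf_involutions arc_openers_def)
  finally show ?thesis by simp
qed

definition arc_change :: "(nat \<Rightarrow> nat) \<Rightarrow> nat \<Rightarrow> nat \<Rightarrow> int" where
  "arc_change \<sigma> s1 s2 = des_change \<sigma> s2 s1 + (if s1 = s2 then 1 else des_change \<sigma> s1 s2)"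

lemma arc_change_cases: "arc_change \<sigma> s1 s2 \<in> {0, 1, 2}"
  using des_change_cases[of \<sigma> s2 s1] des_change_cases[of \<sigma> s1 s2] by (auto simp: arc_change_def)

lemma des_insert_arc:
  assumes \<sigma>: "\<sigma> permutes {1..N}" and "s1 \<le> s2" "s2 \<le> N"
  shows "int (des (Suc (Suc N)) (insert_arc \<sigma> s1 s2)) = int (des N \<sigma>) + arc_change \<sigma> s1 s2"
proof -
  let ?w = "insert_letter \<sigma> s2 s1"
  have w: "?w permutes {1..Suc N}"
    using assms by (intro permutes_insert_letter) auto
  then have "insert_arc \<sigma> s1 s2 permutes {1..Suc (Suc N)}"
    unfolding insert_arc_def using assms by (intro permutes_insert_letter) auto
  then have "int (des (Suc (Suc N)) (insert_arc \<sigma> s1 s2)) = ext_des (Suc (Suc N)) (insert_arc \<sigma> s1 s2)"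
    by (rule des_eq_ext_des)
  also have "\<dots> = ext_des (Suc N) ?w + des_change ?w s1 (Suc s2)"
    unfolding insert_arc_def
    using injD[OF permutes_inj[OF w], of s1 "Suc s1"] assms by (intro ext_des_insert_letter) auto
  also have "ext_des (Suc N) ?w = ext_des N \<sigma> + des_change \<sigma> s2 s1"
    using injD[OF permutes_inj[OF \<sigma>], of s2 "Suc s2"] assms by (intro ext_des_insert_letter) auto
  also have "ext_des N \<sigma> = int (des N \<sigma>)"
    by (rule des_eq_ext_des [OF \<sigma>, symmetric])
  finally show ?thesis
    using assms(2) by (simp add: des_change_insert_letter arc_change_def)
qed

section \<open>Moments of the descent increment\<close>

definition ext_asc :: "nat \<Rightarrow> (nat \<Rightarrow> nat) \<Rightarrow> int" where
  "ext_asc L w = (\<Sum>i<Suc L. of_bool (w i < w (Suc i)))"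

lemma ext_asc_eq:
  assumes "inj w"
  shows "ext_asc L w = int L + 1 - ext_des L w"
proof -
  have "of_bool (w i < w (Suc i)) + of_bool (w (Suc i) < w i) = (1::int)" for i
  proof -
    have "w i \<noteq> w (Suc i)"
      using injD[OF assms, of i "Suc i"] by auto
    then show ?thesis by (cases "w i < w (Suc i)") auto
  qed
  then have "ext_asc L w + ext_des L w = (\<Sum>i<Suc L. 1)"
    unfolding ext_asc_def ext_des_def by (simp only: sum.distrib[symmetric])
  then show ?thesis by simp
qed

definition crossing :: "(nat \<Rightarrow> nat) \<Rightarrow> nat \<Rightarrow> nat \<Rightarrow> int" where
  "crossing w x t = of_bool (t < w x) - of_bool (t < w (Suc x))"

lemma des_change_eq_crossing: "des_change w x t = crossing w x t + of_bool (w x < w (Suc x))"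
  by (simp add: des_change_def crossing_def)

lemma sum_of_bool_less: "(\<Sum>t<K. (of_bool (t < v) :: int)) = int (min v K)"
  by (induction K) (auto simp: min_def)

lemma sum_of_bool_le_telescope:
  fixes g :: "nat \<Rightarrow> int"
  assumes "a \<le> K"
  shows "(\<Sum>t<K. of_bool (a \<le> t) * (g t - g (Suc t))) = g a - g K"
  using assms
proof (induction K)
  case (Suc K)
  show ?case
  proof (cases "a \<le> K")
    case True
    then show ?thesis using Suc.IH by simp
  next
    case False
    then have "a = Suc K" using Suc.prems by simp
    then show ?thesis by simp
  qed
qed simp

lemma sum_sum_des_change:
  assumes w: "w permutes {1..L}"
  shows "(\<Sum>x<Suc L. \<Sum>t<Suc L. des_change w x t) = int (Suc L) * (ext_asc L w - 1)"
proof -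
  have "(\<Sum>t<Suc L. des_change w x t)
      = int (w x) - int (w (Suc x)) + int (Suc L) * of_bool (w x < w (Suc x))" if "x < Suc L" for x
    using permutes_le_Suc[OF w, of x] permutes_le_Suc[OF w, of "Suc x"] that
    by (simp add: des_change_def sum.distrib sum_subtractf sum_of_bool_less min_def
        del: sum.lessThan_Suc)
  then have "(\<Sum>x<Suc L. \<Sum>t<Suc L. des_change w x t)
      = (\<Sum>x<Suc L. int (w x) - int (w (Suc x))) + int (Suc L) * ext_asc L w"
    by (simp add: ext_asc_def sum.distrib sum_distrib_left del: sum.lessThan_Suc)
  also have "(\<Sum>x<Suc L. int (w x) - int (w (Suc x))) = int (w 0) - int (w (Suc L))"
    by (rule sum_lessThan_telescope')
  finally show ?thesis
    using permutes_not_in[OF w, of 0] permutes_not_in[OF w, of "Suc L"]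
    by (simp add: algebra_simps)
qed

lemma sum_crossing_column:
  assumes w: "w permutes {1..L}" and "t < Suc L"
  shows "(\<Sum>x<Suc L. crossing w x t) = -1"
proof -
  have "(\<Sum>x<Suc L. crossing w x t) = of_bool (t < w 0) - of_bool (t < w (Suc L))"
    unfolding crossing_def by (rule sum_lessThan_telescope')
  then show ?thesis
    using permutes_not_in[OF w, of 0] permutes_not_in[OF w, of "Suc L"] assms(2) by simp
qed

lemma sum_square_by_rows:
  fixes g :: "nat \<Rightarrow> nat \<Rightarrow> 'a::comm_monoid_add"
  shows "(\<Sum>s2<K. (\<Sum>s1<s2. g s1 s2 + g s2 s1) + g s2 s2) = (\<Sum>x<K. \<Sum>y<K. g x y)"
  by (induction K) (simp_all add: sum.distrib algebra_simps)

text \<open>Lagrange interpolation of the indicator of \<open>d\<close> at the nodes \<open>0, 1, 2\<close>.\<close>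

lemma two_sum_indicator_eq_moments:
  fixes c :: "'a \<Rightarrow> int"
  assumes "finite S" and "\<And>x. x \<in> S \<Longrightarrow> c x \<in> {0, 1, 2}"
  shows "2 * (\<Sum>x\<in>S. of_bool (c x = d)) =
      of_bool (d = 0) * ((\<Sum>x\<in>S. (c x)\<^sup>2) - 3 * (\<Sum>x\<in>S. c x) + 2 * int (card S))
    + of_bool (d = 1) * (4 * (\<Sum>x\<in>S. c x) - 2 * (\<Sum>x\<in>S. (c x)\<^sup>2))
    + of_bool (d = 2) * ((\<Sum>x\<in>S. (c x)\<^sup>2) - (\<Sum>x\<in>S. c x))"
proof -
  have "2 * of_bool (c x = d) =
      of_bool (d = 0) * ((c x)\<^sup>2 - 3 * c x + 2) + of_bool (d = 1) * (4 * c x - 2 * (c x)\<^sup>2)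
    + of_bool (d = 2) * ((c x)\<^sup>2 - c x)" if "x \<in> S" for x
    using assms(2)[OF that] by (auto simp: power2_eq_square)
  then have "2 * (\<Sum>x\<in>S. of_bool (c x = d)) = (\<Sum>x\<in>S.
      of_bool (d = 0) * ((c x)\<^sup>2 - 3 * c x + 2) + of_bool (d = 1) * (4 * c x - 2 * (c x)\<^sup>2)
    + of_bool (d = 2) * ((c x)\<^sup>2 - c x))"
    by (simp add: sum_distrib_left del: sum_of_bool_eq)
  then show ?thesis
    by (simp add: sum.distrib sum_subtractf sum_distrib_left del: sum_of_bool_eq)
qed

context
  fixes \<sigma> :: "nat \<Rightarrow> nat" and N :: nat
  assumes \<sigma>: "\<sigma> \<in> fpf_involutions N"
begin

lemma sum_des_change_diag: "(\<Sum>x<Suc N. des_change \<sigma> x x) = ext_asc N \<sigma> - 1"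
proof -
  have boundary: "\<sigma> 0 = 0" "\<sigma> (Suc N) = Suc N"
    using \<sigma> by (auto simp: fpf_involutions_iff)
  have "(of_bool (x < \<sigma> (Suc x)) :: int) = of_bool (Suc x < \<sigma> (Suc x)) + of_bool (x = N)"
    if "x < Suc N" for x
  proof (cases "x = N")
    case False
    then have "\<sigma> (Suc x) \<noteq> Suc x"
      using \<sigma> that by (auto simp: fpf_involutions_iff)
    then show ?thesis using False by auto
  qed (simp add: boundary)
  then have "(\<Sum>x<Suc N. des_change \<sigma> x x)
      = (\<Sum>x<Suc N. (of_bool (x < \<sigma> x) - of_bool (Suc x < \<sigma> (Suc x)) :: int))
        - (\<Sum>x<Suc N. of_bool (x = N)) + ext_asc N \<sigma>"
    by (simp add: des_change_def ext_asc_def sum.distrib sum_subtractf del: sum.lessThan_Suc)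
  also have "(\<Sum>x<Suc N. (of_bool (x < \<sigma> x) - of_bool (Suc x < \<sigma> (Suc x)) :: int))
      = of_bool (0 < \<sigma> 0) - of_bool (Suc N < \<sigma> (Suc N))"
    by (rule sum_lessThan_telescope')
  finally show ?thesis by (simp add: boundary)
qed

text \<open>Both factors telescope in \<open>t\<close>; the involution property turns the boundary terms into
  \<open>[x < x + 1] - [x < x]\<close>.\<close>

lemma sum_crossing_mult_transpose:
  assumes "x < Suc N"
  shows "(\<Sum>t<Suc N. crossing \<sigma> x t * crossing \<sigma> t x) = 1"
proof -
  let ?g = "\<lambda>t. (of_bool (x < \<sigma> t) :: int)"
  note bounded = permutes_le_Suc[OF fpf_involution_permutes[OF \<sigma>]]
  have "crossing \<sigma> x t * crossing \<sigma> t x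
      = of_bool (\<sigma> (Suc x) \<le> t) * (?g t - ?g (Suc t)) - of_bool (\<sigma> x \<le> t) * (?g t - ?g (Suc t))" for t
    by (auto simp: crossing_def not_less [symmetric])
  then have "(\<Sum>t<Suc N. crossing \<sigma> x t * crossing \<sigma> t x)
      = (\<Sum>t<Suc N. of_bool (\<sigma> (Suc x) \<le> t) * (?g t - ?g (Suc t)))
        - (\<Sum>t<Suc N. of_bool (\<sigma> x \<le> t) * (?g t - ?g (Suc t)))"
    by (simp only: sum_subtractf)
  also have "\<dots> = (?g (\<sigma> (Suc x)) - ?g (Suc N)) - (?g (\<sigma> x) - ?g (Suc N))"
    using assms by (intro arg_cong2[where f = minus] sum_of_bool_le_telescope bounded) auto
  finally show ?thesis by (simp add: fpf_involution_twice[OF \<sigma>])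
qed

lemma sum_sum_des_change_mult_transpose:
  "(\<Sum>x<Suc N. \<Sum>t<Suc N. des_change \<sigma> x t * des_change \<sigma> t x) = (ext_asc N \<sigma> - 1)\<^sup>2 + int N"
proof -
  note perm = fpf_involution_permutes[OF \<sigma>]
  let ?a = "\<lambda>x. (of_bool (\<sigma> x < \<sigma> (Suc x)) :: int)"
  let ?c = "crossing \<sigma>"
  have "des_change \<sigma> x t * des_change \<sigma> t x = ?c x t * ?c t x + ?a t * ?c x t + ?a x * ?c t x + ?a x * ?a t"
    for x t by (simp add: des_change_eq_crossing algebra_simps)
  then have expand: "(\<Sum>x<Suc N. \<Sum>t<Suc N. des_change \<sigma> x t * des_change \<sigma> t x)
      = (\<Sum>x<Suc N. \<Sum>t<Suc N. ?c x t * ?c t x) + (\<Sum>x<Suc N. \<Sum>t<Suc N. ?a t * ?c x t)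
        + (\<Sum>x<Suc N. ?a x * (\<Sum>t<Suc N. ?c t x)) + (\<Sum>x<Suc N. ?a x * (\<Sum>t<Suc N. ?a t))"
    by (simp only: sum.distrib sum_distrib_left)
  have "(\<Sum>x<Suc N. \<Sum>t<Suc N. ?a t * ?c x t) = (\<Sum>t<Suc N. ?a t * (\<Sum>x<Suc N. ?c x t))"
    unfolding sum_distrib_left by (rule sum.swap)
  also have "\<dots> = (\<Sum>t<Suc N. - ?a t)"
    by (rule sum.cong) (simp_all add: sum_crossing_column[OF perm] del: sum.lessThan_Suc)
  finally have rows: "(\<Sum>x<Suc N. \<Sum>t<Suc N. ?a t * ?c x t) = - ext_asc N \<sigma>"
    by (simp only: ext_asc_def sum_negf)
  have "(\<Sum>x<Suc N. ?a x * (\<Sum>t<Suc N. ?c t x)) = (\<Sum>x<Suc N. - ?a x)"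
    by (rule sum.cong) (simp_all add: sum_crossing_column[OF perm] del: sum.lessThan_Suc)
  then have columns: "(\<Sum>x<Suc N. ?a x * (\<Sum>t<Suc N. ?c t x)) = - ext_asc N \<sigma>"
    by (simp only: ext_asc_def sum_negf)
  have square: "(\<Sum>x<Suc N. ?a x * (\<Sum>t<Suc N. ?a t)) = ext_asc N \<sigma> * ext_asc N \<sigma>"
    by (simp only: ext_asc_def sum_distrib_right)
  have diagonal: "(\<Sum>x<Suc N. \<Sum>t<Suc N. ?c x t * ?c t x) = int (Suc N)"
    by (simp add: sum_crossing_mult_transpose del: sum.lessThan_Suc)
  show ?thesis
    unfolding expand rows columns square diagonal by (simp add: power2_eq_square algebra_simps)
qed

lemma ext_asc_fpf: "ext_asc N \<sigma> = int N + 1 - int (des N \<sigma>)"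
proof -
  note perm = fpf_involution_permutes[OF \<sigma>]
  show ?thesis
    using ext_asc_eq[OF permutes_inj[OF perm]] des_eq_ext_des[OF perm] by simp
qed

lemma sum_arc_change:
  "(\<Sum>(s1, s2)\<in>arc_slots N. arc_change \<sigma> s1 s2) = int (Suc N) * (int N + 1 - int (des N \<sigma>))"
proof -
  let ?M = "des_change \<sigma>"
  define row where "row s2 = (\<Sum>s1<s2. ?M s1 s2 + ?M s2 s1) + ?M s2 s2" for s2
  have "(\<Sum>(s1, s2)\<in>arc_slots N. arc_change \<sigma> s1 s2) = (\<Sum>s2<Suc N. row s2 + 1)"
    unfolding sum_arc_slots row_def by (intro sum.cong) (auto simp: arc_change_def intro!: sum.cong)
  also have "\<dots> = (\<Sum>s2<Suc N. row s2) + int (Suc N)"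
    by (simp add: sum.distrib del: sum.lessThan_Suc)
  also have "(\<Sum>s2<Suc N. row s2) = (\<Sum>x<Suc N. \<Sum>y<Suc N. ?M x y)"
    unfolding row_def by (rule sum_square_by_rows)
  also have "\<dots> = int (Suc N) * (ext_asc N \<sigma> - 1)"
    by (rule sum_sum_des_change[OF fpf_involution_permutes[OF \<sigma>]])
  finally show ?thesis
    by (simp add: ext_asc_fpf algebra_simps)
qed

lemma sum_arc_change_squared:
  "(\<Sum>(s1, s2)\<in>arc_slots N. (arc_change \<sigma> s1 s2)\<^sup>2)
    = int (Suc N) * (int N + 1 - int (des N \<sigma>)) + (int N + 1 - int (des N \<sigma>)) * (int N - int (des N \<sigma>))
      + int N"
proof -
  let ?M = "des_change \<sigma>"
  define g where "g x y = ?M x y + ?M x y * ?M y x" for x y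
  define row where "row s2 = (\<Sum>s1<s2. g s1 s2 + g s2 s1) + g s2 s2" for s2
  have idem: "?M x y * ?M x y = ?M x y" for x y
    using des_change_cases[of \<sigma> x y] by auto
  have "(\<Sum>(s1, s2)\<in>arc_slots N. (arc_change \<sigma> s1 s2)\<^sup>2) = (\<Sum>s2<Suc N. row s2 + (?M s2 s2 + 1))"
    unfolding sum_arc_slots row_def
    by (intro sum.cong) (auto simp: arc_change_def g_def power2_eq_square algebra_simps idem
        intro!: sum.cong)
  also have "\<dots> = (\<Sum>s2<Suc N. row s2) + (\<Sum>x<Suc N. ?M x x) + int (Suc N)"
    by (simp add: sum.distrib del: sum.lessThan_Suc)
  also have "(\<Sum>s2<Suc N. row s2) = (\<Sum>x<Suc N. \<Sum>y<Suc N. g x y)"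
    unfolding row_def by (rule sum_square_by_rows)
  also have "\<dots> = (\<Sum>x<Suc N. \<Sum>y<Suc N. ?M x y) + (\<Sum>x<Suc N. \<Sum>y<Suc N. ?M x y * ?M y x)"
    by (simp add: g_def sum.distrib del: sum.lessThan_Suc)
  also have "\<dots> = int (Suc N) * (ext_asc N \<sigma> - 1) + ((ext_asc N \<sigma> - 1)\<^sup>2 + int N)"
    by (simp only: sum_sum_des_change[OF fpf_involution_permutes[OF \<sigma>]]
        sum_sum_des_change_mult_transpose)
  also have "(\<Sum>x<Suc N. ?M x x) = ext_asc N \<sigma> - 1"
    by (rule sum_des_change_diag)
  finally show ?thesis
    by (simp add: ext_asc_fpf power2_eq_square algebra_simps)
qed

lemma two_sum_arc_change_indicator:
  fixes k :: int
  defines "j \<equiv> int (des N \<sigma>)"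
  shows "2 * (\<Sum>(s1, s2)\<in>arc_slots N. of_bool (j + arc_change \<sigma> s1 s2 = k)) =
      of_bool (j = k) * (k * (k + 1) + int N)
    + of_bool (j = k - 1) * (2 * ((k - 1) * (int N - k + 1) + 1))
    + of_bool (j = k - 2) * ((int N - k + 2) * (int N - k + 3) + int N)"
proof -
  let ?c = "\<lambda>(s1, s2). arc_change \<sigma> s1 s2"
  define S1 where "S1 = (\<Sum>p\<in>arc_slots N. ?c p)"
  define S2 where "S2 = (\<Sum>p\<in>arc_slots N. (?c p)\<^sup>2)"
  have S1: "S1 = int (Suc N) * (int N + 1 - j)"
    using sum_arc_change by (simp add: S1_def j_def case_prod_unfold)
  have S2: "S2 = int (Suc N) * (int N + 1 - j) + (int N + 1 - j) * (int N - j) + int N"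
    using sum_arc_change_squared by (simp add: S2_def j_def case_prod_unfold)
  have card: "2 * int (card (arc_slots N)) = int (Suc N) * int (Suc (Suc N))"
    using card_arc_slots[of N] by (metis of_nat_mult of_nat_numeral)
  have "2 * (\<Sum>(s1, s2)\<in>arc_slots N. of_bool (j + arc_change \<sigma> s1 s2 = k))
      = 2 * (\<Sum>p\<in>arc_slots N. of_bool (?c p = k - j))"
    by (intro arg_cong[where f = "(*) 2"] sum.cong) auto
  also have "\<dots> = of_bool (k - j = 0) * (S2 - 3 * S1 + 2 * int (card (arc_slots N)))
      + of_bool (k - j = 1) * (4 * S1 - 2 * S2) + of_bool (k - j = 2) * (S2 - S1)"
    unfolding S1_def S2_def
    using arc_change_cases by (intro two_sum_indicator_eq_moments finite_arc_slots) auto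
  also have "\<dots> = of_bool (j = k) * (k * (k + 1) + int N)
    + of_bool (j = k - 1) * (2 * ((k - 1) * (int N - k + 1) + 1))
    + of_bool (j = k - 2) * ((int N - k + 2) * (int N - k + 3) + int N)"
    unfolding S1 S2 card
    by (cases "j = k"; cases "j = k - 1"; cases "j = k - 2") (auto simp: algebra_simps)
  finally show ?thesis .
qed

end

theorem J_recurrence:
  fixes N :: nat and k :: int
  shows "int (N + 2) * J (N + 2) k =
      (k * (k + 1) + int N) * J N k
    + 2 * ((k - 1) * (int N - k + 1) + 1) * J N (k - 1)
    + ((int N - k + 2) * (int N - k + 3) + int N) * J N (k - 2)"
proof -
  let ?m = "Suc (Suc N)"
  let ?E1 = "k * (k + 1) + int N"
  let ?E2 = "2 * ((k - 1) * (int N - k + 1) + 1)"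
  let ?E3 = "(int N - k + 2) * (int N - k + 3) + int N"
  have "int ?m = 2 * int (card (arc_openers ?m \<pi>))" if "\<pi> \<in> fpf_involutions ?m" for \<pi>
    using arg_cong[OF card_arc_openers[OF that], of int] by simp
  then have "int ?m * J ?m k
      = 2 * (\<Sum>\<pi>\<in>fpf_involutions ?m. int (card (arc_openers ?m \<pi>)) * of_bool (int (des ?m \<pi>) = k))"
    unfolding J_eq_sum sum_distrib_left by (intro sum.cong) simp_all
  also have "\<dots> = 2 * (\<Sum>\<sigma>\<in>fpf_involutions N. \<Sum>(s1, s2)\<in>arc_slots N.
      of_bool (int (des ?m (insert_arc \<sigma> s1 s2)) = k))"
    by (simp only: sum_insert_arc[where f = "\<lambda>\<pi>. of_bool (int (des ?m \<pi>) = k)"])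
  also have "\<dots> = (\<Sum>\<sigma>\<in>fpf_involutions N.
      2 * (\<Sum>(s1, s2)\<in>arc_slots N. of_bool (int (des N \<sigma>) + arc_change \<sigma> s1 s2 = k)))"
    unfolding sum_distrib_left
    by (intro sum.cong arg_cong[where f = "(*) 2"])
      (auto simp: arc_slots_def des_insert_arc[OF fpf_involution_permutes])
  also have "\<dots> = (\<Sum>\<sigma>\<in>fpf_involutions N. of_bool (int (des N \<sigma>) = k) * ?E1
      + of_bool (int (des N \<sigma>) = k - 1) * ?E2 + of_bool (int (des N \<sigma>) = k - 2) * ?E3)"
    by (intro sum.cong) (simp_all only: two_sum_arc_change_indicator)
  also have "\<dots> = J N k * ?E1 + J N (k - 1) * ?E2 + J N (k - 2) * ?E3"
    by (simp only: J_eq_sum sum.distrib sum_distrib_right)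
  finally show ?thesis
    by (simp add: algebra_simps)
qed

theorem theorem2p1:
  fixes n :: nat and k :: int
  assumes "n \<ge> 2" and "k \<ge> 0"
  shows "2 * int n * J (2*n) k =
           (k*(k+1) + 2*int n - 2) * J (2*n-2) k
         + 2 * ((k-1)*(2*int n - k - 1) + 1) * J (2*n-2) (k-1)
         + ((2*int n - k)*(2*int n - k + 1) + 2*int n - 2) * J (2*n-2) (k-2)"
proof -
  define N where "N = 2 * n - 2"
  have m: "N + 2 = 2 * n" and iN: "int N = 2 * int n - 2"
    using assms(1) by (auto simp: N_def)
  from J_recurrence[of N k] show ?thesis
    unfolding N_def [symmetric] m iN by (simp add: algebra_simps)
qed

end
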